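(* Let $U$ be the set of positive integers $N$ for which there are no antipalindromic numbers $A,B$ with $N=A/B$. Then the lower density of $U$ satisfies $\liminf_{n\to\infty}\frac1n\,|U\cap\{1,\dots,n\}|\ge \frac1{60}$.
   Context: A positive integer $n$ is antipalindromic if its binary representation $w=w_1\cdots w_L$ (most significant digit first, no leading zeros) has even length $L$ and satisfies $w_i+w_{L+1-i}=1$ for all $i$. *)

theory Defs
  imports "HOL-Analysis.Analysis"
begin

definition bitlen :: "nat \<Rightarrow> nat" where
  "bitlen n = (LEAST L. n < 2 ^ L)"

definition bdigit :: "nat \<Rightarrow> nat \<Rightarrow> nat" where
  "bdigit n j = (n div 2 ^ j) mod 2"

text \<open>w_i = bdigit n (L - i) for i = 1..L (most significant first);
  the condition w_i + w_(L+1-i) = 1 becomes bdigit n j + bdigit n (L-1-j) = 1 for j < L.\<close>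
definition antipalindromic :: "nat \<Rightarrow> bool" where
  "antipalindromic n \<longleftrightarrow> n > 0 \<and> even (bitlen n) \<and>
     (\<forall>i\<in>{1..bitlen n}. bdigit n (bitlen n - i) + bdigit n (bitlen n - (bitlen n + 1 - i)) = 1)"

definition U_set :: "nat set" where
  "U_set = {N. N > 0 \<and> \<not> (\<exists>A B. antipalindromic A \<and> antipalindromic B \<and> real N = real A / real B)}"

end

theory Submission
  imports Defs
begin

text \<open>Let an antipalindromic A be written as 2^t * u with u odd. Its lowest digit mirrors the
  leading 1, so t > 0; the t zeros at the bottom followed by the 1 at position t mirror to t ones
  at the top followed by a 0. Hence A / 2^(bitlen A) lies in [1 - 2^-t, 1 - 2^-(t+1)), and
  as t > 0 any two points of this interval have ratio less than 3/2. If A = N * B with N odd, then A and B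
  have the same t, so N * 2^(bitlen B - bitlen A) lies in (2/3, 3/2). For odd N between
  3/2 * 4^p and 8/3 * 4^p this forces bitlen A - bitlen B = 2p + 1, contradicting that both
  lengths are even. The odd N strictly between 6 * 4^r and 10 * 4^r are of this kind, so U contains
  2 * 4^r numbers up to 10 * 4^r, which gives density at least 1/32.\<close>

lemma bitlen_bounds:
  assumes "0 < n"
  shows "n < 2 ^ bitlen n" "0 < bitlen n" "2 ^ (bitlen n - 1) \<le> n"
proof -
  show "n < 2 ^ bitlen n"
    unfolding bitlen_def by (rule LeastI[of _ n]) simp
  then show pos: "0 < bitlen n"
    using assms by (cases "bitlen n") auto
  have "\<not> n < 2 ^ (bitlen n - 1)"
    unfolding bitlen_def by (rule not_less_Least) (use pos in \<open>simp add: bitlen_def\<close>)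
  then show "2 ^ (bitlen n - 1) \<le> n" by simp
qed

lemma bdigit_bitlen_top:
  assumes "0 < n"
  shows "bdigit n (bitlen n - 1) = 1"
proof -
  note bounds = bitlen_bounds[OF assms]
  have "(2::nat) ^ bitlen n = 2 * 2 ^ (bitlen n - 1)"
    using bounds(2) by (simp flip: power_Suc)
  then have "n div 2 ^ (bitlen n - 1) < 2"
    using bounds(1) by (simp add: div_less_iff_less_mult)
  moreover have "1 \<le> n div 2 ^ (bitlen n - 1)"
    using div_le_mono[OF bounds(3), of "2 ^ (bitlen n - 1)"] by simp
  ultimately show ?thesis
    unfolding bdigit_def by simp
qed

lemma bdigit_div_two_power: "bdigit (x div 2 ^ s) i = bdigit x (s + i)"
  unfolding bdigit_def by (simp add: div_mult2_eq power_add)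

lemma bdigit_two_power_mult_below:
  assumes "j < t"
  shows "bdigit (2 ^ t * u) j = 0"
proof -
  have "(2::nat) ^ t = 2 ^ j * 2 ^ (t - j)"
    using assms by (simp flip: power_add)
  then have "2 ^ t * u div 2 ^ j = 2 ^ (t - j) * u"
    by simp
  then show ?thesis
    using assms unfolding bdigit_def by simp
qed

lemma bdigit_two_power_mult_odd:
  assumes "odd u"
  shows "bdigit (2 ^ t * u) t = 1"
  using assms unfolding bdigit_def by (simp add: odd_iff_mod_2_eq_one)

lemma antipalindromic_bdigit:
  assumes "antipalindromic A" "j < bitlen A"
  shows "bdigit A j + bdigit A (bitlen A - 1 - j) = 1"
proof -
  let ?L = "bitlen A"
  have "?L - j \<in> {1..?L}"
    using assms(2) by auto
  with assms(1) have "bdigit A (?L - (?L - j)) + bdigit A (?L - (?L + 1 - (?L - j))) = 1"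
    unfolding antipalindromic_def by blast
  moreover have "?L - (?L - j) = j" "?L - (?L + 1 - (?L - j)) = ?L - 1 - j"
    using assms(2) by auto
  ultimately show ?thesis by simp
qed

lemma bdigits_one_imp_Suc_eq_two_power:
  "x < 2 ^ k \<Longrightarrow> (\<forall>i<k. bdigit x i = 1) \<Longrightarrow> x + 1 = 2 ^ k"
proof (induction k arbitrary: x)
  case 0
  then show ?case by simp
next
  case (Suc k)
  have "x div 2 + 1 = 2 ^ k"
  proof (rule Suc.IH)
    show "x div 2 < 2 ^ k"
      using Suc.prems(1) by simp
    show "\<forall>i<k. bdigit (x div 2) i = 1"
      using Suc.prems(2) bdigit_div_two_power[of x 1] by simp
  qed
  moreover have "x mod 2 = 1"
    using Suc.prems(2) unfolding bdigit_def by auto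
  then have "x + 1 = 2 * (x div 2 + 1)"
    by presburger
  with \<open>x div 2 + 1 = 2 ^ k\<close> show ?case
    by simp
qed

text \<open>The last claim says that the leading t + 1 digits of A are t ones followed by a zero.\<close>

lemma antipalindromic_leading_bdigits:
  assumes ap: "antipalindromic A" and A: "A = 2 ^ t * u" and u: "odd u"
  shows "0 < t" "t < bitlen A" "A div 2 ^ (bitlen A - (t + 1)) + 2 = 2 ^ (t + 1)"
proof -
  let ?L = "bitlen A"
  have pos: "0 < A"
    using ap unfolding antipalindromic_def by simp
  note bounds = bitlen_bounds[OF pos]
  have "(2::nat) ^ t \<le> A"
    using A u by (cases u) auto
  then show t_less: "t < ?L"
    using bounds(1) by (meson le_less_trans nat_power_less_imp_less pos2)
  have "bdigit A 0 = 0"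
    using antipalindromic_bdigit[OF ap bounds(2)] bdigit_bitlen_top[OF pos] by simp
  then show "0 < t"
    using bdigit_two_power_mult_odd[OF u, of 0] A by (cases t) auto
  define s where "s = ?L - (t + 1)"
  have L: "?L = s + 1 + t"
    unfolding s_def using t_less by simp
  define q where "q = A div 2 ^ s"
  have "q div 2 + 1 = 2 ^ t"
  proof (rule bdigits_one_imp_Suc_eq_two_power)
    have "A < 2 ^ (s + 1) * 2 ^ t"
      using bounds(1) L by (simp add: power_add)
    then show "q div 2 < 2 ^ t"
      unfolding q_def by (simp add: div_mult2_eq div_less_iff_less_mult mult_ac)
    show "\<forall>i<t. bdigit (q div 2) i = 1"
    proof (intro allI impI)
      fix i assume "i < t"
      then have "bdigit A (s + 1 + i) + bdigit A (t - 1 - i) = 1"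
        using antipalindromic_bdigit[OF ap, of "s + 1 + i"] L by simp
      moreover have "bdigit A (t - 1 - i) = 0"
        using bdigit_two_power_mult_below \<open>i < t\<close> A by simp
      moreover have "q div 2 = A div 2 ^ (s + 1)"
        unfolding q_def by (metis div_mult2_eq power_Suc2 Suc_eq_plus1)
      ultimately show "bdigit (q div 2) i = 1"
        using bdigit_div_two_power[of A "s + 1" i] by simp
    qed
  qed
  moreover have "q mod 2 = 0"
  proof -
    have "bdigit A s + bdigit A t = 1"
      using antipalindromic_bdigit[OF ap, of s] L by simp
    then show ?thesis
      using bdigit_two_power_mult_odd[OF u, of t] A unfolding q_def bdigit_def by simp
  qed
  then have "q + 2 = 2 * (q div 2 + 1)"
    by presburger
  ultimately have "q + 2 = 2 ^ (t + 1)"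
    by simp
  then show "A div 2 ^ (?L - (t + 1)) + 2 = 2 ^ (t + 1)"
    unfolding q_def s_def .
qed

lemma antipalindromic_mantissa_bounds:
  assumes "antipalindromic A" "A = 2 ^ t * u" "odd u"
  shows "2 ^ (t + 1) * 2 ^ bitlen A \<le> 2 ^ (t + 1) * A + 2 * 2 ^ bitlen A"
    and "2 ^ (t + 1) * A + 2 ^ bitlen A < 2 ^ (t + 1) * 2 ^ bitlen A"
proof -
  note lead = antipalindromic_leading_bdigits[OF assms]
  define T where "T = (2::nat) ^ (t + 1)"
  define a where "a = (2::nat) ^ (bitlen A - (t + 1))"
  have "bitlen A = (t + 1) + (bitlen A - (t + 1))"
    using lead(2) by simp
  then have L: "2 ^ bitlen A = T * a"
    unfolding T_def a_def by (metis power_add)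
  have "T * a = A div a * a + 2 * a"
    using lead(3) unfolding T_def a_def by (metis add_mult_distrib)
  moreover have "A div a * a + A mod a = A"
    by (rule div_mult_mod_eq)
  moreover have "A mod a < a"
    unfolding a_def by simp
  ultimately have "T * a \<le> A + 2 * a" "A + a < T * a"
    by linarith+
  then have "T * (T * a) \<le> T * (A + 2 * a)" "T * (A + a) < T * (T * a)"
    unfolding T_def by simp_all
  then have "T * (T * a) \<le> T * A + 2 * (T * a)" "T * A + T * a < T * (T * a)"
    by (simp_all add: algebra_simps)
  then show "2 ^ (t + 1) * 2 ^ bitlen A \<le> 2 ^ (t + 1) * A + 2 * 2 ^ bitlen A"
    and "2 ^ (t + 1) * A + 2 ^ bitlen A < 2 ^ (t + 1) * 2 ^ bitlen A"
    unfolding L T_def[symmetric] by simp_all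
qed

lemma antipalindromic_same_valuation_ratio:
  assumes A: "antipalindromic A" "A = 2 ^ t * u" "odd u"
    and B: "antipalindromic B" "B = 2 ^ t * v" "odd v"
  shows "2 * A * 2 ^ bitlen B < 3 * B * 2 ^ bitlen A"
proof -
  define T where "T = (2::nat) ^ (t + 1)"
  define X where "X = (2::nat) ^ bitlen A"
  define Y where "Y = (2::nat) ^ bitlen B"
  have "(2::nat) ^ 2 \<le> T"
    unfolding T_def using antipalindromic_leading_bdigits(1)[OF A]
    by (intro power_increasing) simp_all
  then have T: "4 * (X * Y) \<le> T * (X * Y)"
    by simp
  have "T * A + X < T * X"
    using antipalindromic_mantissa_bounds(2)[OF A] unfolding T_def X_def .
  then have "(T * A + X) * Y < T * X * Y"
    unfolding Y_def by (rule mult_less_mono1) simp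
  then have upper: "T * A * Y + X * Y < T * (X * Y)"
    by (simp add: algebra_simps)
  have "T * Y \<le> T * B + 2 * Y"
    using antipalindromic_mantissa_bounds(1)[OF B] unfolding T_def Y_def .
  then have "T * Y * X \<le> (T * B + 2 * Y) * X"
    by (rule mult_le_mono1)
  then have lower: "T * (X * Y) \<le> T * B * X + 2 * (X * Y)"
    by (simp add: algebra_simps)
  from T upper lower have "2 * (T * A * Y) < 3 * (T * B * X)"
    by linarith
  then show ?thesis
    unfolding X_def Y_def by (simp add: algebra_simps)
qed

lemma antipalindromic_odd_multiple_bitlen:
  assumes A: "antipalindromic A" and B: "antipalindromic B" and AB: "A = N * B" and N: "odd N"
  shows "2 * N * 2 ^ bitlen B < 3 * 2 ^ bitlen A"
    and "2 * 2 ^ bitlen A < 3 * N * 2 ^ bitlen B"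
proof -
  have "0 < B"
    using B unfolding antipalindromic_def by simp
  define t where "t = multiplicity 2 B"
  define v where "v = B div 2 ^ t"
  have B_eq: "B = 2 ^ t * v"
    unfolding v_def t_def by (simp add: multiplicity_dvd)
  have v: "odd v"
    using multiplicity_decompose[of B 2] \<open>0 < B\<close> unfolding v_def t_def by simp
  have A_eq: "A = 2 ^ t * (N * v)"
    using AB B_eq by simp
  have Nv: "odd (N * v)"
    using N v by simp
  have "B * (2 * N * 2 ^ bitlen B) < B * (3 * 2 ^ bitlen A)"
    using antipalindromic_same_valuation_ratio[OF A A_eq Nv B B_eq v] AB
    by (simp add: algebra_simps)
  then show "2 * N * 2 ^ bitlen B < 3 * 2 ^ bitlen A"
    by simp
  have "B * (2 * 2 ^ bitlen A) < B * (3 * N * 2 ^ bitlen B)"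
    using antipalindromic_same_valuation_ratio[OF B B_eq v A A_eq Nv] AB
    by (simp add: algebra_simps)
  then show "2 * 2 ^ bitlen A < 3 * N * 2 ^ bitlen B"
    by simp
qed

lemma odd_in_U_set:
  fixes N p :: nat
  assumes N: "odd N" and lower: "3 * 4 ^ p \<le> 2 * N" and upper: "3 * N \<le> 8 * 4 ^ p"
  shows "N \<in> U_set"
proof -
  have "\<not> (antipalindromic A \<and> antipalindromic B \<and> real N = real A / real B)" for A B
  proof
    assume H: "antipalindromic A \<and> antipalindromic B \<and> real N = real A / real B"
    then have A: "antipalindromic A" and B: "antipalindromic B"
      by auto
    then have "0 < B"
      unfolding antipalindromic_def by simp
    with H have "A = N * B"
      by (simp add: field_simps flip: of_nat_mult)
    note bounds = antipalindromic_odd_multiple_bitlen[OF A B this N]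
    have two_power_low: "4 ^ p * 2 ^ bitlen B = (2::nat) ^ (2 * p + bitlen B)"
      and two_power_high: "4 * 4 ^ p * 2 ^ bitlen B = (2::nat) ^ (2 * p + bitlen B + 2)"
      by (simp_all add: power_add power_mult)
    have "3 * 4 ^ p * 2 ^ bitlen B \<le> 2 * N * 2 ^ bitlen B"
      using lower by simp
    with bounds(1) have "4 ^ p * 2 ^ bitlen B < (2::nat) ^ bitlen A"
      by linarith
    then have "2 * p + bitlen B < bitlen A"
      unfolding two_power_low by simp
    have "3 * N * 2 ^ bitlen B \<le> 8 * 4 ^ p * 2 ^ bitlen B"
      using upper by simp
    with bounds(2) have "2 ^ bitlen A < 4 * 4 ^ p * (2::nat) ^ bitlen B"
      by linarith
    then have "bitlen A < 2 * p + bitlen B + 2"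
      using power_strict_increasing_iff[of "2::nat" "bitlen A" "2 * p + bitlen B + 2"]
      unfolding two_power_high by simp
    with \<open>2 * p + bitlen B < bitlen A\<close> have "bitlen A = 2 * p + bitlen B + 1"
      by simp
    moreover have "even (bitlen A)" "even (bitlen B)"
      using A B unfolding antipalindromic_def by simp_all
    ultimately show False
      by simp
  qed
  moreover have "0 < N"
    using N by (cases N) simp_all
  ultimately show ?thesis
    unfolding U_set_def by blast
qed

lemma card_U_set_four_power: "2 * 4 ^ r \<le> card (U_set \<inter> {1..10 * 4 ^ r})"
proof -
  let ?odds = "(\<lambda>i. 6 * 4 ^ r + 2 * i + 1 :: nat) ` {..<2 * 4 ^ r}"
  have "?odds \<subseteq> U_set \<inter> {1..10 * 4 ^ r}"
  proof
    fix N assume "N \<in> ?odds"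
    then obtain i where i: "i < 2 * 4 ^ r" and N: "N = 6 * 4 ^ r + 2 * i + 1"
      by blast
    have "N \<in> U_set"
      by (rule odd_in_U_set[of N "r + 1"]) (use i N in simp_all)
    then show "N \<in> U_set \<inter> {1..10 * 4 ^ r}"
      using i N by simp
  qed
  moreover have "card ?odds = 2 * 4 ^ r"
    by (simp add: card_image inj_on_def)
  ultimately show ?thesis
    by (metis card_mono finite_Int finite_atLeastAtMost)
qed

lemma card_U_set_lower_bound:
  assumes "16 \<le> n"
  shows "n < 32 * card (U_set \<inter> {1..n})"
proof -
  have "1 \<le> n div 16"
    using assms by simp
  then obtain r where r: "4 ^ r \<le> n div 16" "n div 16 < 4 ^ (r + 1)"
    using ex_power_ivl1[of 4 "n div 16"] by auto
  then have "10 * 4 ^ r \<le> n"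
    by linarith
  then have "card (U_set \<inter> {1..10 * 4 ^ r}) \<le> card (U_set \<inter> {1..n})"
    by (intro card_mono) auto
  moreover have "n < 64 * 4 ^ r"
    using r(2) by simp
  ultimately show ?thesis
    using card_U_set_four_power[of r] by linarith
qed

theorem corollary19:
  shows "liminf (\<lambda>n. ereal (real (card (U_set \<inter> {1..n})) / real n)) \<ge> ereal (1/60)"
proof (rule Liminf_bounded)
  show "\<forall>\<^sub>F n in sequentially. ereal (1/60) \<le> ereal (real (card (U_set \<inter> {1..n})) / real n)"
  proof (rule eventually_sequentiallyI)
    fix n :: nat
    assume "16 \<le> n"
    then show "ereal (1/60) \<le> ereal (real (card (U_set \<inter> {1..n})) / real n)"
      using card_U_set_lower_bound[of n] by (simp add: field_simps)
  qed
qed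

end
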